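(* Let $A(x)=\sum_{i=0}^d a_ix^i\in\mathbb{Z}[x]$ be primitive of degree $d\ge1$ with $a_0\ne0$, and let $m>d$. Then $\Lambda_m$ is a submodule of $\Theta_m$ of index $|a_d|^{m-d}$.
   Context: A vector $(x_1,\dots,x_m)$ is a linear recurrence determined by $A$ if $\sum_{i=0}^d a_ix_{j+i}=0$ for all $1\le j\le m-d$. $\Lambda_m\subseteq\mathbb{Z}^m$ is the $\mathbb{Z}$-module of vectors in $\mathbb{Z}^m$ that are linear recurrences determined by $A$; $\Theta_m\subseteq\mathbb{Z}^d\times\mathbb{Q}^{m-d}$ is the $\mathbb{Z}$-module of vectors in $\mathbb{Q}^m$ that are linear recurrences determined by $A$ and whose first $d$ coordinates are integers. *)

theory Defs
  imports "HOL-Computational_Algebra.Computational_Algebra" "HOL-Algebra.Coset"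
begin

text \<open>Vectors in Q^m are rational lists of length m; coordinate x_k of the paper
  (1-indexed) is the list entry at position k-1.\<close>

definition is_lin_rec :: "int poly \<Rightarrow> nat \<Rightarrow> rat list \<Rightarrow> bool" where
  "is_lin_rec A m x \<longleftrightarrow> length x = m \<and>
     (\<forall>j. j + degree A < m \<longrightarrow>
        (\<Sum>i\<le>degree A. of_int (coeff A i) * x ! (j + i)) = 0)"

definition Lambda :: "int poly \<Rightarrow> nat \<Rightarrow> rat list set" where
  "Lambda A m = {x. is_lin_rec A m x \<and> (\<forall>i<m. x ! i \<in> \<int>)}"

definition Theta :: "int poly \<Rightarrow> nat \<Rightarrow> rat list set" where
  "Theta A m = {x. is_lin_rec A m x \<and> (\<forall>i<degree A. x ! i \<in> \<int>)}"

definition vec_add_group :: "nat \<Rightarrow> rat list set \<Rightarrow> rat list monoid" where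
  "vec_add_group m S = \<lparr>carrier = S, mult = (\<lambda>x y. map2 (+) x y), one = replicate m 0\<rparr>"

end

theory Submission
  imports Defs
begin

text \<open>
  Write \<open>d = deg A\<close> and \<open>a\<^sub>d\<close> for the leading coefficient.
  Two vectors of \<open>\<Theta>\<^sub>m\<close> lie in the same coset of \<open>\<Lambda>\<^sub>m\<close> iff they differ by an integer vector,
  i.e. iff they have the same vector of fractional parts; so the index is the number of
  fractional-part vectors of elements of \<open>\<Theta>\<^sub>m\<close>.  We count these coordinate by coordinate:
  an element of \<open>\<Theta>\<^bsub>m+1\<^esub>\<close> is an element \<open>x\<close> of \<open>\<Theta>\<^sub>m\<close> extended by a coordinate forced by the
  recurrence, and with the fractional parts of \<open>x\<close> fixed, the fractional part of the new
  coordinate runs through exactly \<open>|a\<^sub>d|\<close> residues \<open>frac (c + j/a\<^sub>d)\<close>.  That all of them occur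
  is the arithmetic heart of the proof: for primitive \<open>A\<close>, the banded integer map
  \<open>x \<mapsto> (\<Sum>\<^sub>i a\<^sub>i x\<^bsub>j+i\<^esub>)\<^sub>j\<close> is surjective onto integer vectors.  This is shown by induction
  on the length, the induction step using that the attainable values of the newest row
  (with all earlier rows zero) form an ideal of \<open>\<int>\<close> that contains \<open>a\<^sub>d\<close> and, by solving the
  triangular system modulo every prime \<open>p\<close>, lies in no prime ideal.
\<close>


section \<open>Integer sequences: the banded recurrence operator\<close>

definition rec_row :: "int poly \<Rightarrow> (nat \<Rightarrow> int) \<Rightarrow> nat \<Rightarrow> int" where
  "rec_row A x j = (\<Sum>i\<le>degree A. coeff A i * x (j + i))"

definition unit_seq :: "nat \<Rightarrow> nat \<Rightarrow> int" where
  "unit_seq q n = (if n = q then 1 else 0)"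

lemma rec_row_add: "rec_row A (\<lambda>n. x n + y n) j = rec_row A x j + rec_row A y j"
  by (simp add: rec_row_def distrib_left sum.distrib)

lemma rec_row_diff: "rec_row A (\<lambda>n. x n - y n) j = rec_row A x j - rec_row A y j"
  by (simp add: rec_row_def right_diff_distrib sum_subtractf)

lemma rec_row_smult: "rec_row A (\<lambda>n. c * x n) j = c * rec_row A x j"
  by (simp add: rec_row_def sum_distrib_left algebra_simps)

lemma rec_row_unit_seq:
  "rec_row A (unit_seq q) j = (if j \<le> q \<and> q \<le> j + degree A then coeff A (q - j) else 0)"
proof -
  have "rec_row A (unit_seq q) j =
      (\<Sum>i\<le>degree A. if i = q - j then (if j \<le> q then coeff A i else 0) else 0)"
    unfolding rec_row_def unit_seq_def by (rule sum.cong) auto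
  also have "\<dots> = (if j \<le> q \<and> q \<le> j + degree A then coeff A (q - j) else 0)"
    by (subst sum.delta) auto
  finally show ?thesis .
qed

lemma rec_row_split_last:
  "rec_row A y j = (\<Sum>i<degree A. coeff A i * y (j + i)) + lead_coeff A * y (j + degree A)"
  by (simp add: rec_row_def lessThan_Suc_atMost[symmetric])

lemma primitive_coeff_not_dvd:
  fixes p :: int
  assumes "content A = 1" and "prime p"
  shows "\<exists>i. \<not> p dvd coeff A i"
proof (rule ccontr)
  assume "\<not> ?thesis"
  hence "[:p:] dvd A" by (simp add: const_poly_dvd_iff)
  hence "p dvd content A" by (simp add: const_poly_dvd_iff_dvd_content)
  thus False using assms not_prime_unit by auto
qed

text \<open>Modulo a prime \<open>p\<close>, the recurrence rows are triangular: if \<open>a\<^sub>s\<close> is the first coefficient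
  not divisible by \<open>p\<close>, then a unit at position \<open>r + s\<close> contributes \<open>a\<^sub>s\<close> to row \<open>r\<close> and only
  multiples of \<open>p\<close> to the later rows.\<close>
lemma rec_row_unit_pivot: "s \<le> degree A \<Longrightarrow> rec_row A (unit_seq (r + s)) r = coeff A s"
  by (simp add: rec_row_unit_seq)

lemma rec_row_unit_later_rows:
  assumes "\<forall>i<s. p dvd coeff A i" and "r < j"
  shows "p dvd rec_row A (unit_seq (r + s)) j"
  using assms by (auto simp: rec_row_unit_seq)

text \<open>Hence every finite system of rows can be solved modulo \<open>p\<close>, by back substitution
  from the last row upwards.\<close>
lemma rec_rows_solvable_mod_prime:
  fixes p :: int
  assumes p: "prime p" and pivot: "\<not> p dvd coeff A s" and below: "\<forall>i<s. p dvd coeff A i"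
  shows "\<exists>x. \<forall>j\<le>N. p dvd rec_row A x j - t j"
proof -
  have sd: "s \<le> degree A" using pivot by (metis dvd_0_right le_degree)
  have "coprime p (coeff A s)" using p pivot by (simp add: prime_imp_coprime)
  then obtain u v where uv: "u * coeff A s + v * p = 1"
    using bezout_int[of "coeff A s" p] by (metis coprime_iff_gcd_eq_1 gcd.commute)
  have "\<exists>x. \<forall>j. Suc N - n \<le> j \<and> j \<le> N \<longrightarrow> p dvd rec_row A x j - t j" if "n \<le> Suc N" for n
    using that
  proof (induction n)
    case 0
    then show ?case by auto
  next
    case (Suc n)
    then obtain x where x: "\<forall>j. Suc N - n \<le> j \<and> j \<le> N \<longrightarrow> p dvd rec_row A x j - t j"
      by auto
    define r where "r = N - n"
    have r: "Suc N - Suc n = r" "Suc N - n = Suc r" using Suc.prems by (auto simp: r_def)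
    define w where "w = u * (t r - rec_row A x r)"
    define x' where "x' = (\<lambda>k. x k + w * unit_seq (r + s) k)"
    have row_x': "rec_row A x' j = rec_row A x j + w * rec_row A (unit_seq (r + s)) j" for j
      unfolding x'_def by (simp only: rec_row_add rec_row_smult)
    have "p dvd rec_row A x' j - t j" if "r \<le> j" "j \<le> N" for j
    proof (cases "j = r")
      case True
      have "rec_row A x' j = rec_row A x r + w * coeff A s"
        using True row_x' rec_row_unit_pivot[OF sd] by simp
      hence "rec_row A x' j - t j = (rec_row A x r - t r) * (1 - u * coeff A s)"
        using True unfolding w_def by (simp add: algebra_simps)
      also have "1 - u * coeff A s = v * p" using uv by linarith
      finally show ?thesis by simp
    next
      case False
      hence "p dvd rec_row A x j - t j" "p dvd rec_row A (unit_seq (r + s)) j"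
        using x r that below rec_row_unit_later_rows by auto
      then show ?thesis using row_x'[of j]
        by (metis (no_types) add_diff_eq diff_add_eq dvd_add dvd_mult)
    qed
    then show ?case using r by metis
  qed
  from this[of "Suc N"] show ?thesis by auto
qed

lemma int_ideal_contains_one:
  fixes T :: "int set"
  assumes diff: "\<And>a b. a \<in> T \<Longrightarrow> b \<in> T \<Longrightarrow> a - b \<in> T"
    and scale: "\<And>a q. a \<in> T \<Longrightarrow> q * a \<in> T"
    and nonzero: "c \<in> T" "c \<noteq> 0"
    and not_in_prime: "\<And>p. prime p \<Longrightarrow> \<exists>a\<in>T. \<not> p dvd a"
  shows "1 \<in> T"
proof -
  define g where "g = (LEAST n::nat. n > 0 \<and> int n \<in> T)"
  have "\<bar>c\<bar> \<in> T" using scale[OF nonzero(1), of "sgn c"] by (simp add: abs_sgn mult.commute)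
  hence "nat \<bar>c\<bar> > 0 \<and> int (nat \<bar>c\<bar>) \<in> T" using nonzero(2) by simp
  hence g: "g > 0" "int g \<in> T"
    using LeastI[of "\<lambda>n. n > 0 \<and> int n \<in> T"] unfolding g_def by blast+
  have g_dvd: "int g dvd a" if "a \<in> T" for a
  proof -
    have "a - (a div int g) * int g \<in> T" by (rule diff[OF that scale[OF g(2)]])
    hence in_T: "a mod int g \<in> T" by (simp add: minus_div_mult_eq_mod)
    have "\<not> (nat (a mod int g) > 0 \<and> int (nat (a mod int g)) \<in> T)"
      using not_less_Least[of "nat (a mod int g)" "\<lambda>n. n > 0 \<and> int n \<in> T"] g(1)
      unfolding g_def[symmetric] by (simp add: nat_less_iff)
    moreover have "a mod int g \<ge> 0" using g(1) by simp
    ultimately have "a mod int g = 0" using in_T by (metis int_nat_eq less_le zero_less_nat_eq)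
    thus ?thesis by (simp add: dvd_eq_mod_eq_0)
  qed
  have "g = 1"
  proof (rule ccontr)
    assume "g \<noteq> 1"
    then obtain p where p: "prime p" "p dvd g" using prime_factor_nat by blast
    obtain a where "a \<in> T" "\<not> int p dvd a" using not_in_prime[of "int p"] p(1) by auto
    moreover have "int p dvd int g" using p by simp
    ultimately show False using g_dvd dvd_trans by blast
  qed
  thus ?thesis using g(2) by simp
qed


section \<open>Surjectivity of the integer recurrence rows for primitive polynomials\<close>

definition rows_surjective :: "int poly \<Rightarrow> nat \<Rightarrow> bool" where
  "rows_surjective A k \<longleftrightarrow> (\<forall>b. \<exists>x. \<forall>j. j + degree A < k \<longrightarrow> rec_row A x j = b j)"

text \<open>The values of the next row \<open>k - d\<close> attainable while all earlier rows vanish; this is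
  an ideal of \<open>\<int>\<close>, and the induction step for surjectivity shows it is all of \<open>\<int>\<close>.\<close>
definition last_row_values :: "int poly \<Rightarrow> nat \<Rightarrow> int set" where
  "last_row_values A k = {c. \<exists>y. (\<forall>j. j + degree A < k \<longrightarrow> rec_row A y j = 0)
                                  \<and> rec_row A y (k - degree A) = c}"

lemma last_row_values_diff:
  assumes "a \<in> last_row_values A k" "b \<in> last_row_values A k"
  shows "a - b \<in> last_row_values A k"
proof -
  obtain ya yb where "\<forall>j. j + degree A < k \<longrightarrow> rec_row A ya j = 0" "rec_row A ya (k - degree A) = a"
    "\<forall>j. j + degree A < k \<longrightarrow> rec_row A yb j = 0" "rec_row A yb (k - degree A) = b"
    using assms unfolding last_row_values_def by blast
  then show ?thesis unfolding last_row_values_def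
    by (intro CollectI exI[of _ "\<lambda>n. ya n - yb n"]) (simp add: rec_row_diff)
qed

lemma last_row_values_scale:
  assumes "a \<in> last_row_values A k"
  shows "q * a \<in> last_row_values A k"
proof -
  obtain y where "\<forall>j. j + degree A < k \<longrightarrow> rec_row A y j = 0" "rec_row A y (k - degree A) = a"
    using assms unfolding last_row_values_def by blast
  then show ?thesis unfolding last_row_values_def
    by (intro CollectI exI[of _ "\<lambda>n. q * y n"]) (simp add: rec_row_smult)
qed

text \<open>A unit at position \<open>k\<close> only meets the row \<open>k - d\<close>, through the leading coefficient.\<close>
lemma lead_coeff_in_last_row_values:
  assumes "degree A \<le> k"
  shows "lead_coeff A \<in> last_row_values A k"
  unfolding last_row_values_def
  by (intro CollectI exI[of _ "unit_seq k"]) (use assms in \<open>auto simp: rec_row_unit_seq\<close>)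

text \<open>Key step: solve the rows modulo \<open>p\<close> with target \<open>e\<^bsub>k-d\<^esub>\<close>, then use surjectivity of the
  earlier rows to correct the solution by a multiple of \<open>p\<close> so that those rows vanish
  exactly; row \<open>k - d\<close> stays \<open>\<equiv> 1 (mod p)\<close>.\<close>
lemma last_row_values_not_in_prime:
  fixes p :: int
  assumes cont: "content A = 1" and surj: "rows_surjective A k" and p: "prime p"
  shows "\<exists>c\<in>last_row_values A k. \<not> p dvd c"
proof -
  define N where "N = k - degree A"
  obtain i where "\<not> p dvd coeff A i" using primitive_coeff_not_dvd[OF cont p] by blast
  define s where "s = (LEAST i. \<not> p dvd coeff A i)"
  have pivot: "\<not> p dvd coeff A s" unfolding s_def by (rule LeastI) fact
  have below: "\<forall>i<s. p dvd coeff A i" unfolding s_def using not_less_Least by blast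
  obtain x0 where x0: "\<forall>j\<le>N. p dvd rec_row A x0 j - unit_seq N j"
    using rec_rows_solvable_mod_prime[OF p pivot below] by blast
  obtain z where z: "\<forall>j. j + degree A < k \<longrightarrow> rec_row A z j = rec_row A x0 j div p"
    using surj unfolding rows_surjective_def by (elim allE[of _ "\<lambda>j. rec_row A x0 j div p"]) blast
  define y where "y = (\<lambda>n. x0 n - p * z n)"
  have row_y: "rec_row A y j = rec_row A x0 j - p * rec_row A z j" for j
    unfolding y_def by (simp only: rec_row_diff rec_row_smult)
  have "rec_row A y j = 0" if "j + degree A < k" for j
  proof -
    have "j \<le> N" "j \<noteq> N" using that by (auto simp: N_def)
    hence "p dvd rec_row A x0 j" using x0 by (auto simp: unit_seq_def)
    then show ?thesis using z that row_y by simp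
  qed
  moreover have "\<not> p dvd rec_row A y N"
  proof
    assume "p dvd rec_row A y N"
    hence "p dvd rec_row A y N + p * rec_row A z N" by simp
    hence "p dvd rec_row A x0 N" using row_y by simp
    moreover have "p dvd rec_row A x0 N - 1" using x0[rule_format, of N] by (simp add: unit_seq_def)
    ultimately have "p dvd rec_row A x0 N - (rec_row A x0 N - 1)" by (rule dvd_diff)
    hence "p dvd 1" by simp
    thus False using p not_prime_unit by blast
  qed
  ultimately show ?thesis unfolding last_row_values_def N_def by blast
qed

lemma last_row_values_UNIV:
  assumes cont: "content A = 1" and surj: "rows_surjective A k" and dk: "degree A \<le> k"
  shows "c \<in> last_row_values A k"
proof -
  have "lead_coeff A \<noteq> 0" using cont by auto
  hence "1 \<in> last_row_values A k"
    using int_ideal_contains_one[OF last_row_values_diff last_row_values_scale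
        lead_coeff_in_last_row_values[OF dk]] last_row_values_not_in_prime[OF cont surj]
    by blast
  from last_row_values_scale[OF this, of c] show ?thesis by simp
qed

text \<open>Induction on the length: a new row is handled by adding a sequence from
  \<open>last_row_values\<close>, which leaves the earlier rows unchanged.\<close>
lemma rows_surjective_primitive:
  assumes cont: "content A = 1"
  shows "rows_surjective A k"
proof (induction k)
  case 0
  then show ?case by (simp add: rows_surjective_def)
next
  case (Suc k)
  show ?case
  proof (cases "degree A \<le> k")
    case False
    then show ?thesis by (simp add: rows_surjective_def)
  next
    case dk: True
    show ?thesis unfolding rows_surjective_def
    proof
      fix b
      obtain x where x: "\<forall>j. j + degree A < k \<longrightarrow> rec_row A x j = b j"
        using Suc.IH unfolding rows_surjective_def by blast
      obtain y where y: "\<forall>j. j + degree A < k \<longrightarrow> rec_row A y j = 0"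
          "rec_row A y (k - degree A) = b (k - degree A) - rec_row A x (k - degree A)"
        using last_row_values_UNIV[OF cont Suc.IH dk] unfolding last_row_values_def by blast
      have "rec_row A (\<lambda>n. x n + y n) j = b j" if "j + degree A < Suc k" for j
      proof (cases "j + degree A < k")
        case True
        then show ?thesis using x y by (simp add: rec_row_add)
      next
        case False
        hence "j = k - degree A" using that by simp
        then show ?thesis using y by (simp add: rec_row_add)
      qed
      then show "\<exists>x. \<forall>j. j + degree A < Suc k \<longrightarrow> rec_row A x j = b j" by blast
    qed
  qed
qed

lemma last_row_prescribed:
  assumes "content A = 1" and "degree A \<le> k"
  shows "\<exists>y. (\<forall>j. j + degree A < k \<longrightarrow> rec_row A y j = 0) \<and> rec_row A y (k - degree A) = c"
  using last_row_values_UNIV[OF assms(1) rows_surjective_primitive[OF assms(1)] assms(2)]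
  unfolding last_row_values_def by blast


lemma is_lin_rec_map:
  "is_lin_rec A m (map f [0..<m]) \<longleftrightarrow>
     (\<forall>j. j + degree A < m \<longrightarrow> (\<Sum>i\<le>degree A. of_int (coeff A i) * f (j + i)) = 0)"
proof -
  have "(\<Sum>i\<le>degree A. of_int (coeff A i) * map f [0..<m] ! (j + i)) =
        (\<Sum>i\<le>degree A. of_int (coeff A i) * f (j + i))" if "j + degree A < m" for j
    using that by (intro sum.cong) auto
  then show ?thesis unfolding is_lin_rec_def by auto
qed

lemma length_Theta: "x \<in> Theta A m \<Longrightarrow> length x = m"
  by (simp add: Theta_def is_lin_rec_def)

lemma length_Lambda: "x \<in> Lambda A m \<Longrightarrow> length x = m"
  by (simp add: Lambda_def is_lin_rec_def)

lemma Lambda_subset_Theta: "degree A \<le> m \<Longrightarrow> Lambda A m \<subseteq> Theta A m"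
  by (auto simp: Lambda_def Theta_def)

lemma lin_rec_comb:
  assumes "is_lin_rec A m x" "is_lin_rec A m y"
  shows "is_lin_rec A m (map (\<lambda>n. c1 * x ! n + c2 * y ! n) [0..<m])"
  unfolding is_lin_rec_map
proof (intro allI impI)
  fix j assume j: "j + degree A < m"
  have "(\<Sum>i\<le>degree A. of_int (coeff A i) * (c1 * x ! (j + i) + c2 * y ! (j + i))) =
     c1 * (\<Sum>i\<le>degree A. of_int (coeff A i) * x ! (j + i))
     + c2 * (\<Sum>i\<le>degree A. of_int (coeff A i) * y ! (j + i))"
    by (simp add: sum_distrib_left sum.distrib algebra_simps)
  also have "\<dots> = 0" using assms j by (simp add: is_lin_rec_def)
  finally show "(\<Sum>i\<le>degree A. of_int (coeff A i) * (c1 * x ! (j + i) + c2 * y ! (j + i))) = 0" .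
qed

lemma Theta_comb:
  assumes "x \<in> Theta A m" "y \<in> Theta A m" "degree A \<le> m"
  shows "map (\<lambda>n. of_int c1 * x ! n + of_int c2 * y ! n) [0..<m] \<in> Theta A m"
  using assms lin_rec_comb[of A m x y] by (auto simp: Theta_def intro!: Ints_add Ints_mult)

lemma Lambda_comb:
  assumes "x \<in> Lambda A m" "y \<in> Lambda A m"
  shows "map (\<lambda>n. of_int c1 * x ! n + of_int c2 * y ! n) [0..<m] \<in> Lambda A m"
  using assms lin_rec_comb[of A m x y] by (auto simp: Lambda_def intro!: Ints_add Ints_mult)

definition int_shift :: "rat list \<Rightarrow> (nat \<Rightarrow> int) \<Rightarrow> rat list" where
  "int_shift x y = map (\<lambda>n. x ! n + of_int (y n)) [0..<length x]"

lemma length_int_shift [simp]: "length (int_shift x y) = length x"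
  by (simp add: int_shift_def)

lemma nth_int_shift [simp]: "n < length x \<Longrightarrow> int_shift x y ! n = x ! n + of_int (y n)"
  by (simp add: int_shift_def)

lemma Theta_int_shift:
  assumes x: "x \<in> Theta A m" and y: "\<forall>j. j + degree A < m \<longrightarrow> rec_row A y j = 0"
    and dm: "degree A \<le> m"
  shows "int_shift x y \<in> Theta A m"
proof -
  have lx: "length x = m" using length_Theta[OF x] .
  have "(\<Sum>i\<le>degree A. of_int (coeff A i) * (x ! (j + i) + of_int (y (j + i)))) = 0"
    if "j + degree A < m" for j
  proof -
    have "(\<Sum>i\<le>degree A. of_int (coeff A i) * (x ! (j + i) + of_int (y (j + i)))) =
        (\<Sum>i\<le>degree A. of_int (coeff A i) * x ! (j + i)) + of_int (rec_row A y j)"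
      unfolding rec_row_def by (simp add: distrib_left sum.distrib)
    also have "\<dots> = 0" using x y that by (simp add: Theta_def is_lin_rec_def)
    finally show ?thesis .
  qed
  then have "is_lin_rec A m (int_shift x y)"
    unfolding int_shift_def lx is_lin_rec_map by simp
  moreover have "\<forall>i<degree A. int_shift x y ! i \<in> \<int>"
    using x lx dm by (auto simp: Theta_def)
  ultimately show ?thesis by (simp add: Theta_def)
qed

definition frac_vec :: "rat list \<Rightarrow> rat list" where
  "frac_vec xs = map frac xs"

lemma frac_eq_iff_diff_Ints: "frac x = frac y \<longleftrightarrow> x - y \<in> \<int>"
proof
  assume "frac x = frac y"
  then obtain k where "x = y + of_int k" by (rule frac_eqE)
  then show "x - y \<in> \<int>" by simp
next
  assume "x - y \<in> \<int>"
  then show "frac x = frac y" using frac_add_int_left[of "x - y" y] by simp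
qed

lemma frac_vec_eq_iff:
  "length x = length x' \<Longrightarrow>
     frac_vec x = frac_vec x' \<longleftrightarrow> (\<forall>n<length x. x ! n - x' ! n \<in> \<int>)"
  by (simp add: frac_vec_def list_eq_iff_nth_eq frac_eq_iff_diff_Ints)

lemma frac_vec_eq_imp_int_shift:
  assumes "length x = length x0" "frac_vec x = frac_vec x0"
  shows "\<exists>y. x = int_shift x0 y"
proof
  have "x ! n = x0 ! n + of_int \<lfloor>x ! n - x0 ! n\<rfloor>" if "n < length x" for n
    using assms that by (simp add: frac_vec_eq_iff)
  then show "x = int_shift x0 (\<lambda>n. \<lfloor>x ! n - x0 ! n\<rfloor>)"
    using assms(1) by (intro nth_equalityI) auto
qed

lemma frac_vec_int_shift [simp]: "frac_vec (int_shift x y) = frac_vec x"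
  by (simp add: frac_vec_eq_iff)


lemma map2_plus_eq:
  "length x = m \<Longrightarrow> length y = m \<Longrightarrow> map2 (+) x y = map (\<lambda>n. x ! n + y ! n) [0..<m]"
  by (intro nth_equalityI) auto

lemma map_uminus_eq:
  "length x = m \<Longrightarrow> map uminus x = map (\<lambda>n. of_int 0 * x ! n + of_int (-1) * x ! n) [0..<m]"
  by (intro nth_equalityI) auto

lemma Theta_add: "x \<in> Theta A m \<Longrightarrow> y \<in> Theta A m \<Longrightarrow> degree A \<le> m \<Longrightarrow> map2 (+) x y \<in> Theta A m"
  using Theta_comb[of x A m y 1 1] map2_plus_eq[OF length_Theta length_Theta] by simp

lemma Theta_uminus: "x \<in> Theta A m \<Longrightarrow> degree A \<le> m \<Longrightarrow> map uminus x \<in> Theta A m"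
  using Theta_comb[of x A m x 0 "-1"] map_uminus_eq[OF length_Theta] by simp

lemma Lambda_add: "x \<in> Lambda A m \<Longrightarrow> y \<in> Lambda A m \<Longrightarrow> map2 (+) x y \<in> Lambda A m"
  using Lambda_comb[of x A m y 1 1] map2_plus_eq[OF length_Lambda length_Lambda] by simp

lemma Lambda_uminus: "x \<in> Lambda A m \<Longrightarrow> map uminus x \<in> Lambda A m"
  using Lambda_comb[of x A m x 0 "-1"] map_uminus_eq[OF length_Lambda] by simp

lemma Theta_group:
  assumes dm: "degree A \<le> m"
  shows "group (vec_add_group m (Theta A m))"
proof (rule groupI)
  fix x y assume "x \<in> carrier (vec_add_group m (Theta A m))" "y \<in> carrier (vec_add_group m (Theta A m))"
  then show "x \<otimes>\<^bsub>vec_add_group m (Theta A m)\<^esub> y \<in> carrier (vec_add_group m (Theta A m))"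
    using Theta_add[OF _ _ dm] by (simp add: vec_add_group_def)
next
  show "\<one>\<^bsub>vec_add_group m (Theta A m)\<^esub> \<in> carrier (vec_add_group m (Theta A m))"
    using dm by (simp add: vec_add_group_def Theta_def is_lin_rec_def)
next
  fix x y z assume "x \<in> carrier (vec_add_group m (Theta A m))"
    "y \<in> carrier (vec_add_group m (Theta A m))" "z \<in> carrier (vec_add_group m (Theta A m))"
  hence "length x = m" "length y = m" "length z = m" by (auto simp: vec_add_group_def length_Theta)
  then show "x \<otimes>\<^bsub>vec_add_group m (Theta A m)\<^esub> y \<otimes>\<^bsub>vec_add_group m (Theta A m)\<^esub> z =
           x \<otimes>\<^bsub>vec_add_group m (Theta A m)\<^esub> (y \<otimes>\<^bsub>vec_add_group m (Theta A m)\<^esub> z)"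
    by (simp add: vec_add_group_def) (intro nth_equalityI, auto)
next
  fix x assume "x \<in> carrier (vec_add_group m (Theta A m))"
  hence "length x = m" by (auto simp: vec_add_group_def length_Theta)
  then show "\<one>\<^bsub>vec_add_group m (Theta A m)\<^esub> \<otimes>\<^bsub>vec_add_group m (Theta A m)\<^esub> x = x"
    by (simp add: vec_add_group_def) (intro nth_equalityI, auto)
next
  fix x assume "x \<in> carrier (vec_add_group m (Theta A m))"
  hence x: "x \<in> Theta A m" by (simp add: vec_add_group_def)
  have "map2 (+) (map uminus x) x = replicate m 0" using length_Theta[OF x]
    by (intro nth_equalityI) auto
  then show "\<exists>y\<in>carrier (vec_add_group m (Theta A m)).
      y \<otimes>\<^bsub>vec_add_group m (Theta A m)\<^esub> x = \<one>\<^bsub>vec_add_group m (Theta A m)\<^esub>"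
    using Theta_uminus[OF x dm] by (auto simp: vec_add_group_def)
qed

lemma Lambda_subgroup:
  assumes dm: "degree A \<le> m"
  shows "subgroup (Lambda A m) (vec_add_group m (Theta A m))"
proof -
  interpret G: group "vec_add_group m (Theta A m)" by (rule Theta_group[OF dm])
  show ?thesis
  proof (rule G.subgroupI)
    show "Lambda A m \<subseteq> carrier (vec_add_group m (Theta A m))"
      using Lambda_subset_Theta[OF dm] by (simp add: vec_add_group_def)
    show "Lambda A m \<noteq> {}"
    proof -
      have "replicate m 0 \<in> Lambda A m" by (simp add: Lambda_def is_lin_rec_def)
      then show ?thesis by blast
    qed
  next
    fix a assume a: "a \<in> Lambda A m"
    have "inv\<^bsub>vec_add_group m (Theta A m)\<^esub> a = map uminus a"
    proof (rule G.inv_equality)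
      show "map uminus a \<otimes>\<^bsub>vec_add_group m (Theta A m)\<^esub> a = \<one>\<^bsub>vec_add_group m (Theta A m)\<^esub>"
        using length_Lambda[OF a] by (simp add: vec_add_group_def) (intro nth_equalityI, auto)
    qed (use a Lambda_uminus[OF a] Lambda_subset_Theta[OF dm] in \<open>auto simp: vec_add_group_def\<close>)
    then show "inv\<^bsub>vec_add_group m (Theta A m)\<^esub> a \<in> Lambda A m" using Lambda_uminus[OF a] by simp
  next
    fix a b assume "a \<in> Lambda A m" "b \<in> Lambda A m"
    then show "a \<otimes>\<^bsub>vec_add_group m (Theta A m)\<^esub> b \<in> Lambda A m"
      using Lambda_add by (simp add: vec_add_group_def)
  qed
qed

section \<open>Cosets of \<open>\<Lambda>\<^sub>m\<close> are classified by fractional parts\<close>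

lemma rcoset_Lambda:
  assumes dm: "degree A \<le> m" and a: "a \<in> Theta A m"
  shows "Lambda A m #>\<^bsub>vec_add_group m (Theta A m)\<^esub> a = {x \<in> Theta A m. frac_vec x = frac_vec a}"
proof (intro equalityI subsetI)
  have la: "length a = m" using length_Theta[OF a] .
  fix z assume "z \<in> Lambda A m #>\<^bsub>vec_add_group m (Theta A m)\<^esub> a"
  then obtain h where h: "h \<in> Lambda A m" "z = map2 (+) h a"
    by (auto simp: r_coset_def vec_add_group_def)
  have lh: "length h = m" using length_Lambda[OF h(1)] .
  have "z \<in> Theta A m" using Theta_add[OF _ a dm] h Lambda_subset_Theta[OF dm] by blast
  moreover have "frac_vec z = frac_vec a"
    using h lh la by (simp add: frac_vec_eq_iff Lambda_def)
  ultimately show "z \<in> {x \<in> Theta A m. frac_vec x = frac_vec a}" by blast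
next
  have la: "length a = m" using length_Theta[OF a] .
  fix x assume "x \<in> {x \<in> Theta A m. frac_vec x = frac_vec a}"
  hence x: "x \<in> Theta A m" "frac_vec x = frac_vec a" by auto
  have lx: "length x = m" using length_Theta[OF x(1)] .
  define h where "h = map2 (+) x (map uminus a)"
  have "h \<in> Theta A m" unfolding h_def by (intro Theta_add Theta_uminus x a dm)
  moreover have "\<forall>n<m. h ! n \<in> \<int>"
    using x(2) lx la by (simp add: h_def frac_vec_eq_iff)
  ultimately have "h \<in> Lambda A m" by (simp add: Lambda_def Theta_def)
  moreover have "x = map2 (+) h a" unfolding h_def using lx la by (intro nth_equalityI) auto
  ultimately show "x \<in> Lambda A m #>\<^bsub>vec_add_group m (Theta A m)\<^esub> a"
    by (auto simp: r_coset_def vec_add_group_def)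
qed

lemma card_rcosets_Lambda:
  assumes dm: "degree A \<le> m"
  shows "card (rcosets\<^bsub>vec_add_group m (Theta A m)\<^esub> (Lambda A m)) = card (frac_vec ` Theta A m)"
proof -
  let ?fibre = "\<lambda>v. {x \<in> Theta A m. frac_vec x = v}"
  have "rcosets\<^bsub>vec_add_group m (Theta A m)\<^esub> (Lambda A m) = ?fibre ` (frac_vec ` Theta A m)"
    unfolding RCOSETS_def using rcoset_Lambda[OF dm] by (auto simp: vec_add_group_def)
  moreover have "inj_on ?fibre (frac_vec ` Theta A m)"
    by (rule inj_onI) blast
  ultimately show ?thesis by (simp add: card_image)
qed


section \<open>Counting fractional-part vectors\<close>

text \<open>The value of coordinate \<open>m\<close> forced by the recurrence row ending there.\<close>
definition next_coord :: "int poly \<Rightarrow> nat \<Rightarrow> rat list \<Rightarrow> rat" where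
  "next_coord A m x =
     - (\<Sum>i<degree A. of_int (coeff A i) * x ! (m - degree A + i)) / of_int (lead_coeff A)"

lemma lin_rec_snoc:
  assumes lx: "length x = m" and dm: "degree A \<le> m"
  shows "is_lin_rec A (Suc m) (x @ [y]) \<longleftrightarrow> is_lin_rec A m x \<and>
     (\<Sum>i<degree A. of_int (coeff A i) * x ! (m - degree A + i)) + of_int (lead_coeff A) * y = 0"
proof -
  have early: "(\<Sum>i\<le>degree A. of_int (coeff A i) * (x @ [y]) ! (j + i)) =
      (\<Sum>i\<le>degree A. of_int (coeff A i) * x ! (j + i))" if "j + degree A < m" for j
    using lx that by (intro sum.cong) (auto simp: nth_append)
  have "(\<Sum>i\<le>degree A. of_int (coeff A i) * (x @ [y]) ! (m - degree A + i)) =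
      (\<Sum>i<degree A. of_int (coeff A i) * (x @ [y]) ! (m - degree A + i)) + of_int (lead_coeff A) * y"
    using lx dm by (simp add: lessThan_Suc_atMost[symmetric] nth_append)
  also have "(\<Sum>i<degree A. of_int (coeff A i) * (x @ [y]) ! (m - degree A + i)) =
      (\<Sum>i<degree A. of_int (coeff A i) * x ! (m - degree A + i))"
    using lx dm by (intro sum.cong) (auto simp: nth_append)
  finally have last: "(\<Sum>i\<le>degree A. of_int (coeff A i) * (x @ [y]) ! (m - degree A + i)) =
      (\<Sum>i<degree A. of_int (coeff A i) * x ! (m - degree A + i)) + of_int (lead_coeff A) * y" .
  have "(\<forall>j. j + degree A < Suc m \<longrightarrow> P j) \<longleftrightarrow> (\<forall>j. j + degree A < m \<longrightarrow> P j) \<and> P (m - degree A)"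
    for P using dm by (auto simp: less_Suc_eq)
  then show ?thesis unfolding is_lin_rec_def using lx early last by auto
qed

lemma Theta_Suc:
  assumes dm: "degree A \<le> m" and lc: "lead_coeff A \<noteq> 0"
  shows "Theta A (Suc m) = (\<lambda>x. x @ [next_coord A m x]) ` Theta A m"
proof (intro equalityI subsetI)
  fix z assume z: "z \<in> Theta A (Suc m)"
  hence "length z = Suc m" by (rule length_Theta)
  then obtain x y where zx: "z = x @ [y]" and lx: "length x = m"
    by (metis append_butlast_last_id length_butlast diff_Suc_1 list.size(3) nat.distinct(1))
  have "is_lin_rec A m x" and
    "(\<Sum>i<degree A. of_int (coeff A i) * x ! (m - degree A + i)) + of_int (lead_coeff A) * y = 0"
    using z zx lin_rec_snoc[OF lx dm] by (auto simp: Theta_def)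
  moreover from this(2) have "y = next_coord A m x"
    using lc unfolding next_coord_def by (simp add: field_simps)
  ultimately show "z \<in> (\<lambda>x. x @ [next_coord A m x]) ` Theta A m"
    using z zx lx dm by (auto simp: Theta_def nth_append)
next
  fix z assume "z \<in> (\<lambda>x. x @ [next_coord A m x]) ` Theta A m"
  then obtain x where x: "x \<in> Theta A m" "z = x @ [next_coord A m x]" by blast
  have lx: "length x = m" by (rule length_Theta[OF x(1)])
  have "(\<Sum>i<degree A. of_int (coeff A i) * x ! (m - degree A + i))
      + of_int (lead_coeff A) * next_coord A m x = 0"
    using lc unfolding next_coord_def by (simp add: field_simps)
  then show "z \<in> Theta A (Suc m)" using x lin_rec_snoc[OF lx dm] lx dm
    by (auto simp: Theta_def nth_append)
qed

lemma next_coord_int_shift: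
  assumes lx: "length x = m" and dm: "degree A \<le> m" and lc: "lead_coeff A \<noteq> 0"
  shows "next_coord A m (int_shift x y) = next_coord A m x
           - of_int (\<Sum>i<degree A. coeff A i * y (m - degree A + i)) / of_int (lead_coeff A)"
proof -
  have "(\<Sum>i<degree A. of_int (coeff A i) * int_shift x y ! (m - degree A + i)) =
      (\<Sum>i<degree A. of_int (coeff A i) * (x ! (m - degree A + i) + of_int (y (m - degree A + i))))"
    using lx dm by (intro sum.cong) auto
  also have "\<dots> = (\<Sum>i<degree A. of_int (coeff A i) * x ! (m - degree A + i))
                  + of_int (\<Sum>i<degree A. coeff A i * y (m - degree A + i))"
    by (simp add: distrib_left sum.distrib)
  finally show ?thesis using lc unfolding next_coord_def by (simp add: field_simps)
qed

lemma card_frac_shifts: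
  fixes a :: int and w :: rat
  assumes a: "a \<noteq> 0"
  shows "card (range (\<lambda>j::int. frac (w + of_int j / of_int a))) = nat \<bar>a\<bar>"
proof -
  let ?f = "\<lambda>j::int. frac (w + of_int j / of_int a)"
  have periodic: "?f (j + a * k) = ?f j" for j k
    using a by (simp add: add_divide_distrib add.assoc[symmetric])
  have "range ?f \<subseteq> ?f ` {0..<\<bar>a\<bar>}"
  proof
    fix z assume "z \<in> range ?f"
    then obtain j where j: "z = ?f j" by blast
    have "j = j mod \<bar>a\<bar> + a * (sgn a * (j div \<bar>a\<bar>))"
      by (simp add: abs_sgn mult.assoc[symmetric] mult.commute)
    hence "z = ?f (j mod \<bar>a\<bar>)" using j periodic by metis
    moreover have "j mod \<bar>a\<bar> \<in> {0..<\<bar>a\<bar>}" using a by simp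
    ultimately show "z \<in> ?f ` {0..<\<bar>a\<bar>}" by blast
  qed
  hence "range ?f = ?f ` {0..<\<bar>a\<bar>}" by auto
  moreover have "inj_on ?f {0..<\<bar>a\<bar>}"
  proof (rule inj_onI)
    fix i j assume i: "i \<in> {0..<\<bar>a\<bar>}" and j: "j \<in> {0..<\<bar>a\<bar>}" and e: "?f i = ?f j"
    obtain n where "w + of_int i / of_int a = w + of_int j / of_int a + of_int n"
      using frac_eqE[OF e] by blast
    hence "(of_int i :: rat) = of_int (j + n * a)" using a by (simp add: field_simps)
    hence ij: "i - j = n * a" by linarith
    have "\<bar>i - j\<bar> < \<bar>a\<bar>" using i j by auto
    hence "\<bar>n\<bar> * \<bar>a\<bar> < 1 * \<bar>a\<bar>" by (simp add: ij abs_mult)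
    hence "\<bar>n\<bar> < 1" by (meson mult_less_cancel_right not_less abs_ge_zero)
    hence "n = 0" by simp
    then show "i = j" using ij by simp
  qed
  ultimately show ?thesis by (simp add: card_image)
qed

text \<open>Every such
  value is attained because, by surjectivity, the last row of an integer shift can be
  prescribed while the earlier rows vanish.\<close>
lemma frac_next_coord_fibre:
  assumes cont: "content A = 1" and dm: "degree A \<le> m" and x0: "x0 \<in> Theta A m"
  shows "{frac (next_coord A m x) | x. x \<in> Theta A m \<and> frac_vec x = frac_vec x0} =
     range (\<lambda>j::int. frac (next_coord A m x0 + of_int j / of_int (lead_coeff A)))"
proof (intro equalityI subsetI)
  have lc: "lead_coeff A \<noteq> 0" using cont by auto
  have lx0: "length x0 = m" by (rule length_Theta[OF x0])
  fix z assume "z \<in> {frac (next_coord A m x) | x. x \<in> Theta A m \<and> frac_vec x = frac_vec x0}"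
  then obtain x where x: "x \<in> Theta A m" "frac_vec x = frac_vec x0" and z: "z = frac (next_coord A m x)"
    by blast
  obtain y where "x = int_shift x0 y"
    using frac_vec_eq_imp_int_shift length_Theta[OF x(1)] lx0 x(2) by metis
  define S where "S = (\<Sum>i<degree A. coeff A i * y (m - degree A + i))"
  have "next_coord A m x = next_coord A m x0 + of_int (- S) / of_int (lead_coeff A)"
    using \<open>x = int_shift x0 y\<close> next_coord_int_shift[OF lx0 dm lc] by (simp add: S_def)
  then show "z \<in> range (\<lambda>j::int. frac (next_coord A m x0 + of_int j / of_int (lead_coeff A)))"
    using z by (intro range_eqI[where x = "- S"]) simp
next
  have lc: "lead_coeff A \<noteq> 0" using cont by auto
  have lx0: "length x0 = m" by (rule length_Theta[OF x0])
  fix z assume "z \<in> range (\<lambda>j::int. frac (next_coord A m x0 + of_int j / of_int (lead_coeff A)))"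
  then obtain j where z: "z = frac (next_coord A m x0 + of_int j / of_int (lead_coeff A))" by blast
  obtain y where y: "\<forall>j. j + degree A < m \<longrightarrow> rec_row A y j = 0" "rec_row A y (m - degree A) = - j"
    using last_row_prescribed[OF cont dm] by blast
  define x where "x = int_shift x0 y"
  have earlier_coeffs: "(\<Sum>i<degree A. coeff A i * y (m - degree A + i)) = - j - lead_coeff A * y m"
    using y(2) rec_row_split_last[of A y "m - degree A"] dm by simp
  have "next_coord A m x = next_coord A m x0 + of_int j / of_int (lead_coeff A) + of_int (y m)"
    unfolding x_def next_coord_int_shift[OF lx0 dm lc] earlier_coeffs using lc by (simp add: field_simps)
  hence "z = frac (next_coord A m x)" using z by simp
  moreover have "x \<in> Theta A m" unfolding x_def by (rule Theta_int_shift[OF x0 y(1) dm])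
  moreover have "frac_vec x = frac_vec x0" by (simp add: x_def)
  ultimately show "z \<in> {frac (next_coord A m x) | x. x \<in> Theta A m \<and> frac_vec x = frac_vec x0}"
    by blast
qed

text \<open>Hence each further coordinate multiplies the number of fractional-part vectors by \<open>|a\<^sub>d|\<close>.\<close>
lemma card_frac_vec_Theta:
  assumes cont: "content A = 1"
  shows "card (frac_vec ` Theta A (degree A + n)) = nat \<bar>lead_coeff A\<bar> ^ n"
proof (induction n)
  case 0
  have "frac_vec ` Theta A (degree A) = {replicate (degree A) 0}"
  proof -
    have "replicate (degree A) 0 \<in> Theta A (degree A)" by (simp add: Theta_def is_lin_rec_def)
    moreover have "frac_vec x = replicate (degree A) 0" if "x \<in> Theta A (degree A)" for x
      using that unfolding Theta_def is_lin_rec_def frac_vec_def by (intro nth_equalityI) auto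
    ultimately show ?thesis by force
  qed
  then show ?case by simp
next
  case (Suc n)
  define m where "m = degree A + n"
  define D where "D = nat \<bar>lead_coeff A\<bar>"
  define V where "V = frac_vec ` Theta A m"
  define F where "F = (\<lambda>v. {frac (next_coord A m x) | x. x \<in> Theta A m \<and> frac_vec x = v})"
  have lc: "lead_coeff A \<noteq> 0" using cont by auto
  hence D0: "D > 0" unfolding D_def by simp
  have dm: "degree A \<le> m" unfolding m_def by simp
  have card_V: "card V = D ^ n" using Suc.IH unfolding V_def m_def D_def .
  hence fin_V: "finite V" using D0 by (metis card_ge_0_finite zero_less_power)
  have card_F: "card (F v) = D" if v: "v \<in> V" for v
  proof -
    obtain x0 where x0: "x0 \<in> Theta A m" "v = frac_vec x0" using v unfolding V_def by blast
    show ?thesis unfolding F_def x0(2) frac_next_coord_fibre[OF cont dm x0(1)] D_def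
      by (rule card_frac_shifts[OF lc])
  qed
  have fin_F: "finite (F v)" if "v \<in> V" for v using card_F[OF that] D0 by (metis card_ge_0_finite)
  have "frac_vec ` Theta A (Suc m) = (\<lambda>(v, f). v @ [f]) ` (SIGMA v:V. F v)"
    unfolding Theta_Suc[OF dm lc] V_def F_def by (auto simp: frac_vec_def image_iff) metis
  moreover have "inj_on (\<lambda>(v, f). v @ [f]) (SIGMA v:V. F v)"
    by (auto simp: inj_on_def)
  ultimately have "card (frac_vec ` Theta A (Suc m)) = card (SIGMA v:V. F v)"
    by (simp add: card_image)
  also have "\<dots> = (\<Sum>v\<in>V. card (F v))" using fin_V fin_F by (simp add: card_SigmaI)
  also have "\<dots> = D ^ Suc n" using card_F card_V by simp
  finally show ?case unfolding m_def D_def by simp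
qed

theorem corollary1:
  fixes A :: "int poly" and m :: nat
  assumes "content A = 1"
    and "degree A \<ge> 1"
    and "coeff A 0 \<noteq> 0"
    and "m > degree A"
  shows "group (vec_add_group m (Theta A m))
    \<and> subgroup (Lambda A m) (vec_add_group m (Theta A m))
    \<and> card (rcosets\<^bsub>vec_add_group m (Theta A m)\<^esub> (Lambda A m))
        = nat \<bar>lead_coeff A\<bar> ^ (m - degree A)"
proof -
  have dm: "degree A \<le> m" using assms(4) by simp
  have "card (frac_vec ` Theta A m) = nat \<bar>lead_coeff A\<bar> ^ (m - degree A)"
    using card_frac_vec_Theta[OF assms(1), of "m - degree A"] dm by simp
  then show ?thesis
    using Theta_group[OF dm] Lambda_subgroup[OF dm] card_rcosets_Lambda[OF dm] by simp
qed

end
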